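(* Let $n,m\ge1$ and let $w\in a^{\le n}(ba^n)^*b\cup\{\epsilon\}$ be such that $wa^nba^m$ is a good word. A word $u$ over $\{a,b\}$ belongs to $L^{\epsilon}_{\vdash_{\{wa^nb,\,wa^nba^m\}}}$ if and only if $u=u_1u_2u_3u_4$ with (1) $u_1\in L^{\epsilon}_{\vdash_{\{wa^nb,\,wa^n\}}}$; (2) $u_2\in L^{\epsilon}_{\vdash_{\{ba^m,\,a\}}}$; (3) $u_3\in L^{\epsilon}_{\vdash_{\{ba^m,\,b\}}}$; (4) $|u_4|_a<m$; (5) $|u_2u_4|_a\equiv0\pmod m$; (6) $|u_1|_a(|w|_b+1)=(|w|_a+n)|u|_b$; (7) $\frac{|u_2|_a+|u_4|_a}{m}-|u_2|_b\le |u_1|-\frac{|u_1|_a(|w|+n)}{|w|_a+n}$.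
   Context: For a set $X$ of words, $X^{\le n}=\bigcup_{i=0}^nX^i$. For words $u,v$, the shuffle $u \sqcup\!\sqcup v$ is the set of all words $u_1v_1\cdots u_kv_k$ with $k\ge 1$, $u=u_1\cdots u_k$, $v=v_1\cdots v_k$ (pieces possibly empty). For a finite set $I$ of words, $v \vdash_I w$ means $w \in v \sqcup\!\sqcup u$ for some $u\in I$; $\vdash_I^*$ is its reflexive-transitive closure and $L^{\epsilon}_{\vdash_I}=\{w : \epsilon \vdash_I^* w\}$. Let $E$ exchange $a$ and $b$ and $\tilde w$ be the reversal of $w$; $w$ is bad if one of $w,\tilde w,E(w),E(\tilde w)$ has a factor $a^kb^h$ ($k,h\ge2$) or $a^kba^lb^{m'}$ ($k>l\ge1$, $m'\ge1$), and good otherwise. *)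

theory Defs
  imports Complex_Main
begin

datatype letter = a | b

type_synonym word = "letter list"

definition cnt :: "letter \<Rightarrow> word \<Rightarrow> nat" where
  "cnt x u = length (filter (\<lambda>y. y = x) u)"

definition pw :: "letter \<Rightarrow> nat \<Rightarrow> word" where
  "pw x k = replicate k x"

definition ins_step :: "word set \<Rightarrow> word \<Rightarrow> word \<Rightarrow> bool" where
  "ins_step I v w \<longleftrightarrow> (\<exists>u\<in>I. w \<in> shuffles v u)"

definition L_eps :: "word set \<Rightarrow> word set" where
  "L_eps I = {w. (ins_step I)\<^sup>*\<^sup>* [] w}"

definition exch :: "word \<Rightarrow> word" where
  "exch w = map (\<lambda>x. case x of a \<Rightarrow> b | b \<Rightarrow> a) w"

definition has_factor :: "word \<Rightarrow> word \<Rightarrow> bool" where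
  "has_factor f w \<longleftrightarrow> (\<exists>x y. w = x @ f @ y)"

definition has_bad_factor :: "word \<Rightarrow> bool" where
  "has_bad_factor w \<longleftrightarrow>
     (\<exists>k h. k \<ge> 2 \<and> h \<ge> 2 \<and> has_factor (pw a k @ pw b h) w) \<or>
     (\<exists>k l m'. k > l \<and> l \<ge> 1 \<and> m' \<ge> 1 \<and> has_factor (pw a k @ [b] @ pw a l @ pw b m') w)"

definition bad :: "word \<Rightarrow> bool" where
  "bad w \<longleftrightarrow> has_bad_factor w \<or> has_bad_factor (rev w) \<or> has_bad_factor (exch w)
             \<or> has_bad_factor (exch (rev w))"

definition good :: "word \<Rightarrow> bool" where
  "good w \<longleftrightarrow> \<not> bad w"

end

(*
  Write W = w a^n b. The hypotheses on w say that W is the staircase a^i b (a^n b)^j with i <= n,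
  and goodness of W a^m forces m <= n as soon as j >= 1. A word is a shuffle of N copies of W,
  t of them followed by a^m, iff it has the right letter counts and every prefix satisfies four
  linear inequalities between its numbers of a's and b's: the inequalities hold for the prefixes
  of the generators and add up under shuffling, and conversely a word satisfying them can be
  distributed greedily among the N copies. Variants of the same argument characterize the four
  languages of the decomposition. To decompose u, cut it after its (|W|_a N)-th a; cut the rest
  where m |.|_b - |.|_a is minimal, so that every suffix of the first piece u2 has at least m a's
  per b and every prefix of the remainder at most m a's per b; finally split the remainder as
  u3 u4 where u3 has a multiple of m a's and u4 fewer than m. The bound (7) says exactly that
  the surplus a's of u2 u4 can be absorbed by the b's of u1 beyond j N and the b's of u2.
*)
theory Submission
  imports Defs
begin

section \<open>Letter counts and shuffles\<close>

lemma cnt_Nil [simp]: "cnt x [] = 0"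
  by (simp add: cnt_def)

lemma cnt_Cons [simp]: "cnt x (y # u) = (if y = x then 1 else 0) + cnt x u"
  by (simp add: cnt_def)

lemma cnt_append [simp]: "cnt x (u @ v) = cnt x u + cnt x v"
  by (simp add: cnt_def)

lemma cnt_replicate [simp]: "cnt x (replicate k y) = (if y = x then k else 0)"
  by (simp add: cnt_def)

lemma pw_eq_replicate [simp]: "pw x k = replicate k x"
  by (simp add: pw_def)

lemma length_eq_cnt_a_plus_cnt_b: "length u = cnt a u + cnt b u"
proof (induction u)
  case (Cons x u)
  then show ?case by (cases x) auto
qed simp

lemma cnt_take_le: "cnt x (take s u) \<le> cnt x u"
  by (metis append_take_drop_id cnt_append le_add1)

lemma ex_take_cnt_eq: "c \<le> cnt x u \<Longrightarrow> \<exists>s \<le> length u. cnt x (take s u) = c"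
proof (induction u arbitrary: c)
  case (Cons y u)
  show ?case
  proof (cases "c = 0")
    case False
    have "c - (if y = x then 1 else 0) \<le> cnt x u"
      using Cons.prems by simp
    then obtain s where "s \<le> length u" "cnt x (take s u) = c - (if y = x then 1 else 0)"
      using Cons.IH by blast
    with False show ?thesis
      by (intro exI[of _ "Suc s"]) auto
  qed (auto intro: exI[of _ 0])
qed simp

lemma cnt_shuffles: "z \<in> shuffles u v \<Longrightarrow> cnt x z = cnt x u + cnt x v"
  unfolding cnt_def by (metis filter_shuffles image_eqI length_shuffles)

lemma shuffles_append:
  "zs \<in> shuffles xs ys \<Longrightarrow> zs' \<in> shuffles xs' ys' \<Longrightarrow> zs @ zs' \<in> shuffles (xs @ xs') (ys @ ys')"
proof (induction xs ys arbitrary: zs rule: shuffles.induct)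
  case (1 ys)
  then show ?case
    by (induction ys arbitrary: zs) (auto intro: Cons_in_shuffles_rightI)
next
  case (2 xs)
  then show ?case
    by (induction xs arbitrary: zs) (auto intro: Cons_in_shuffles_leftI)
next
  case (3 x xs y ys)
  then show ?case
    by (auto intro: Cons_in_shuffles_leftI Cons_in_shuffles_rightI)
qed

lemma append_in_shuffles: "xs @ ys \<in> shuffles xs ys"
  using shuffles_append[of xs xs "[]" ys "[]" ys] by simp

lemma append_in_shuffles_split:
  "xs @ ys \<in> shuffles v g \<Longrightarrow>
    \<exists>v1 v2 g1 g2. v = v1 @ v2 \<and> g = g1 @ g2 \<and> xs \<in> shuffles v1 g1 \<and> ys \<in> shuffles v2 g2"
proof (induction xs arbitrary: v g)
  case Nil
  then show ?case by (metis Nil_in_shufflesI append_Nil)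
next
  case (Cons x xs)
  then consider "v \<noteq> []" "hd v = x" "xs @ ys \<in> shuffles (tl v) g"
    | "g \<noteq> []" "hd g = x" "xs @ ys \<in> shuffles v (tl g)"
    using Cons_in_shuffles_iff by (metis append_Cons)
  then show ?case
  proof cases
    case 1
    with Cons.IH obtain v1 v2 g1 g2 where
      "tl v = v1 @ v2" "g = g1 @ g2" "xs \<in> shuffles v1 g1" "ys \<in> shuffles v2 g2"
      by blast
    with 1 show ?thesis
      by (intro exI[of _ "x # v1"] exI[of _ v2] exI[of _ g1] exI[of _ g2])
         (auto intro: Cons_in_shuffles_leftI simp: list.collapse[symmetric] dest: sym)
  next
    case 2
    with Cons.IH obtain v1 v2 g1 g2 where
      "v = v1 @ v2" "tl g = g1 @ g2" "xs \<in> shuffles v1 g1" "ys \<in> shuffles v2 g2"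
      by blast
    with 2 show ?thesis
      by (intro exI[of _ v1] exI[of _ v2] exI[of _ "x # g1"] exI[of _ g2])
         (auto intro: Cons_in_shuffles_rightI dest: sym)
  qed
qed

section \<open>Insertion languages\<close>

lemma L_eps_Nil [simp]: "[] \<in> L_eps I"
  by (simp add: L_eps_def)

lemma L_eps_step: "y \<in> L_eps I \<Longrightarrow> g \<in> I \<Longrightarrow> x \<in> shuffles y g \<Longrightarrow> x \<in> L_eps I"
  unfolding L_eps_def ins_step_def by (auto intro: rtranclp.rtrancl_into_rtrancl)

lemma L_eps_induct [consumes 1, case_names Nil step]:
  assumes "x \<in> L_eps I" and "P []"
    and "\<And>y g x. y \<in> L_eps I \<Longrightarrow> P y \<Longrightarrow> g \<in> I \<Longrightarrow> x \<in> shuffles y g \<Longrightarrow> P x"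
  shows "P x"
proof -
  have "(ins_step I)\<^sup>*\<^sup>* [] x"
    using assms(1) by (simp add: L_eps_def)
  then show ?thesis
  proof (induction rule: rtranclp_induct)
    case (step y z)
    then show ?case
      using assms(3)[of y _ z] unfolding ins_step_def L_eps_def by blast
  qed (rule assms(2))
qed

lemma replicate_in_L_eps: "[x] \<in> I \<Longrightarrow> replicate k x \<in> L_eps I"
proof (induction k)
  case (Suc k)
  have "replicate (Suc k) x = replicate k x @ [x]"
    by (simp add: replicate_append_same)
  then show ?case
    using L_eps_step[OF Suc.IH[OF Suc.prems] Suc.prems] append_in_shuffles by metis
qed simp

text \<open>A prefix of a shuffle is a shuffle of prefixes, so prefix letter counts add up along
  insertion steps; the last argument of \<open>R\<close> counts the insertions.\<close>

lemma L_eps_additive_invariant: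
  assumes "x \<in> L_eps I"
    and gen: "\<And>g s. g \<in> I \<Longrightarrow> R (cnt a (take s g)) (cnt b (take s g)) (cnt a g) (cnt b g) (1::nat)"
    and zero: "R 0 0 0 0 0"
    and add: "\<And>\<alpha>1 \<beta>1 A1 B1 N1 \<alpha>2 \<beta>2 A2 B2 N2. R \<alpha>1 \<beta>1 A1 B1 N1 \<Longrightarrow> R \<alpha>2 \<beta>2 A2 B2 N2 \<Longrightarrow>
      R (\<alpha>1 + \<alpha>2) (\<beta>1 + \<beta>2) (A1 + A2) (B1 + B2) (N1 + N2)"
  shows "\<exists>N. \<forall>s. R (cnt a (take s x)) (cnt b (take s x)) (cnt a x) (cnt b x) N"
  using assms(1)
proof (induction rule: L_eps_induct)
  case Nil
  then show ?case using zero by auto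
next
  case (step y g x)
  then obtain N where N: "\<forall>s. R (cnt a (take s y)) (cnt b (take s y)) (cnt a y) (cnt b y) N"
    by blast
  have "R (cnt a (take s x)) (cnt b (take s x)) (cnt a x) (cnt b x) (N + 1)" for s
  proof -
    have "take s x @ drop s x \<in> shuffles y g"
      using step.hyps by simp
    then obtain y1 y2 g1 g2 where split: "y = y1 @ y2" "g = g1 @ g2" "take s x \<in> shuffles y1 g1"
      by (meson append_in_shuffles_split)
    have "R (cnt a y1 + cnt a g1) (cnt b y1 + cnt b g1) (cnt a y + cnt a g) (cnt b y + cnt b g) (N + 1)"
      using add[OF N[rule_format, of "length y1"] gen[OF step.hyps(2), of "length g1"]] split(1,2)
      by simp
    then show ?thesis
      using cnt_shuffles[OF split(3)] cnt_shuffles[OF step.hyps(3)] by simp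
  qed
  then show ?case by blast
qed

fun shuffles_of :: "word list \<Rightarrow> word set" where
  "shuffles_of [] = {[]}"
| "shuffles_of (v # vs) = (\<Union>y \<in> shuffles_of vs. shuffles y v)"

lemma shuffles_of_in_L_eps: "x \<in> shuffles_of vs \<Longrightarrow> set vs \<subseteq> I \<Longrightarrow> x \<in> L_eps I"
proof (induction vs arbitrary: x)
  case (Cons v vs)
  then obtain y where "y \<in> shuffles_of vs" "x \<in> shuffles y v"
    by auto
  with Cons show ?case
    by (auto intro: L_eps_step)
qed simp

lemma Nil_in_shuffles_of_replicate: "[] \<in> shuffles_of (replicate N [])"
  by (induction N) auto

lemma snoc_in_shuffles_of:
  "x \<in> shuffles_of vs \<Longrightarrow> k < length vs \<Longrightarrow> x @ [c] \<in> shuffles_of (vs[k := vs ! k @ [c]])"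
proof (induction vs arbitrary: x k)
  case (Cons v vs)
  then obtain y where y: "y \<in> shuffles_of vs" "x \<in> shuffles y v"
    by auto
  show ?case
  proof (cases k)
    case 0
    then show ?thesis
      using y shuffles_append[OF y(2), of "[c]" "[]" "[c]"] by auto
  next
    case (Suc k')
    with Cons y have "y @ [c] \<in> shuffles_of (vs[k' := vs ! k' @ [c]])"
      by simp
    with Suc show ?thesis
      using shuffles_append[OF y(2), of "[c]" "[c]" "[]"] by auto
  qed
qed simp

section \<open>Staircase words and admissible prefixes\<close>

text \<open>\<open>stairs i n (Suc k) = a\<^sup>i b (a\<^sup>n b)\<^sup>k\<close>.\<close>

fun stairs :: "nat \<Rightarrow> nat \<Rightarrow> nat \<Rightarrow> word" where
  "stairs i n 0 = []"
| stairs_Suc: "stairs i n (Suc k) = stairs i n k @ replicate (if k = 0 then i else n) a @ [b]"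

declare stairs_Suc [simp del]

lemma cnt_a_stairs_Suc [simp]: "cnt a (stairs i n (Suc k)) = i + n * k"
  by (induction k) (auto simp: stairs_Suc)

lemma cnt_b_stairs [simp]: "cnt b (stairs i n k) = k"
  by (induction k) (auto simp: stairs_Suc)

lemma take_stairs_append_replicate:
  "\<exists>k' r'. take s (stairs i n k @ replicate r a) = stairs i n k' @ replicate r' a \<and>
     (k' = k \<and> r' \<le> r \<or> k' < k \<and> r' \<le> (if k' = 0 then i else n))"
proof (induction k arbitrary: s r)
  case 0
  show ?case
    by (intro exI[of _ 0] exI[of _ "min s r"]) (simp add: take_replicate)
next
  case (Suc k)
  define X where "X = stairs i n k @ replicate (if k = 0 then i else n) a"
  have split: "stairs i n (Suc k) @ replicate r a = X @ b # replicate r a"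
    by (simp add: X_def stairs_Suc)
  show ?case
  proof (cases "s \<le> length X")
    case True
    then have "take s (stairs i n (Suc k) @ replicate r a) = take s X"
      unfolding split by simp
    with Suc.IH[of s "if k = 0 then i else n"] show ?thesis
      unfolding X_def by (metis less_Suc_eq)
  next
    case False
    then have "take s (stairs i n (Suc k) @ replicate r a)
        = stairs i n (Suc k) @ replicate (min (s - Suc (length X)) r) a"
      unfolding split by (simp add: take_Cons' take_replicate X_def stairs_Suc)
    then show ?thesis
      by (intro exI[of _ "Suc k"] exI[of _ "min (s - Suc (length X)) r"]) simp
  qed
qed

definition stairs_prefix :: "nat \<Rightarrow> nat \<Rightarrow> nat \<Rightarrow> nat \<Rightarrow> word" where
  "stairs_prefix i n \<alpha> \<beta> = stairs i n \<beta> @ replicate (\<alpha> - cnt a (stairs i n \<beta>)) a"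

lemma stairs_prefix_snoc_a:
  "cnt a (stairs i n \<beta>) \<le> \<alpha> \<Longrightarrow> stairs_prefix i n \<alpha> \<beta> @ [a] = stairs_prefix i n (Suc \<alpha>) \<beta>"
  unfolding stairs_prefix_def by (simp add: Suc_diff_le replicate_append_same)

lemma stairs_prefix_snoc_b:
  assumes "\<alpha> = i + n * \<beta>"
  shows "stairs_prefix i n \<alpha> \<beta> @ [b] = stairs_prefix i n \<alpha> (Suc \<beta>)"
proof (cases \<beta>)
  case (Suc \<beta>')
  with assms show ?thesis
    unfolding stairs_prefix_def by (simp add: stairs_Suc[of i n "Suc \<beta>'"])
qed (simp add: assms stairs_prefix_def stairs_Suc)

text \<open>The inequalities satisfied by the numbers \<open>\<alpha>\<close> of a's and \<open>\<beta>\<close> of b's of a prefix of a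
  shuffle of \<open>N\<close> copies of \<open>stairs i n (Suc j)\<close>, each possibly followed by \<open>a\<^sup>m\<close>: a copy
  shows at least \<open>i\<close> a's before its first b and \<open>n\<close> more before each further b (the two
  lower bounds), at most \<open>i + n * k\<close> a's before its \<open>(k + 1)\<close>-st b (the third bound; when
  \<open>j \<ge> 1\<close> it persists after the last b because \<open>m \<le> n\<close>), and the a's of its tail only
  after all its \<open>j + 1\<close> b's (the last bound).\<close>

definition admissible :: "nat \<Rightarrow> nat \<Rightarrow> nat \<Rightarrow> nat \<Rightarrow> nat \<Rightarrow> nat \<Rightarrow> nat \<Rightarrow> bool" where
  "admissible i n j m N \<alpha> \<beta> \<longleftrightarrow>
     i * \<beta> \<le> \<alpha> \<and> n * \<beta> + i * N \<le> \<alpha> + n * N \<and> (1 \<le> j \<longrightarrow> \<alpha> \<le> i * N + n * \<beta>)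
     \<and> \<alpha> + m * j * N \<le> (i + n * j) * N + m * \<beta>"

lemma admissible_0 [simp]: "admissible i n j m 0 0 0"
  by (simp add: admissible_def)

lemma admissible_add:
  "admissible i n j m N1 \<alpha>1 \<beta>1 \<Longrightarrow> admissible i n j m N2 \<alpha>2 \<beta>2 \<Longrightarrow>
    admissible i n j m (N1 + N2) (\<alpha>1 + \<alpha>2) (\<beta>1 + \<beta>2)"
  unfolding admissible_def by (auto simp: algebra_simps)

lemma admissible_take_copy:
  assumes "i \<le> n" and "1 \<le> j \<longrightarrow> m \<le> n" and "r \<le> m"
  shows "admissible i n j m 1 (cnt a (take s (stairs i n (Suc j) @ replicate r a)))
    (cnt b (take s (stairs i n (Suc j) @ replicate r a)))"
proof -
  obtain k r' where x: "take s (stairs i n (Suc j) @ replicate r a) = stairs i n k @ replicate r' a"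
    and k: "k = Suc j \<and> r' \<le> r \<or> k < Suc j \<and> r' \<le> (if k = 0 then i else n)"
    using take_stairs_append_replicate by blast
  have mn: "m * j \<le> n * j"
    using assms(2) by (cases "j = 0") auto
  consider "k = Suc j" "r' \<le> m" | "k = 0" "r' \<le> i" | \<gamma> where "k = Suc \<gamma>" "\<gamma> < j" "r' \<le> n"
    using k assms(3) by (cases k) auto
  then have "admissible i n j m 1 (cnt a (stairs i n k) + r') k"
  proof cases
    case 1
    with assms(1,2) show ?thesis
      unfolding admissible_def
      by (simp add: algebra_simps) (auto intro: mult_le_mono2 trans_le_add2)
  next
    case 2
    with assms(1) mn show ?thesis
      unfolding admissible_def by (simp add: add_mono mult.commute)
  next
    case 3
    then obtain d where "j = Suc (\<gamma> + d)"
      using less_iff_Suc_add by auto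
    with 3 assms(1,2) show ?thesis
      unfolding admissible_def
      by (simp add: algebra_simps)
         (auto intro: add_mono mult_le_mono2 trans_le_add2)
  qed
  then show ?thesis
    unfolding x by simp
qed

lemma L_eps_stairs_admissible:
  assumes "u \<in> L_eps {stairs i n (Suc j), stairs i n (Suc j) @ replicate m a}"
    and "i \<le> n" and "1 \<le> j \<longrightarrow> m \<le> n"
  shows "\<exists>N t. cnt b u = Suc j * N \<and> cnt a u = (i + n * j) * N + m * t \<and>
    (\<forall>s. admissible i n j m N (cnt a (take s u)) (cnt b (take s u)))"
proof -
  let ?R = "\<lambda>\<alpha> \<beta> A B N. admissible i n j m N \<alpha> \<beta> \<and> B = Suc j * N \<and> (\<exists>t. A = (i + n * j) * N + m * t)"
  have "\<exists>N. \<forall>s. ?R (cnt a (take s u)) (cnt b (take s u)) (cnt a u) (cnt b u) N"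
  proof (rule L_eps_additive_invariant[OF assms(1)])
    fix g s
    assume "g \<in> {stairs i n (Suc j), stairs i n (Suc j) @ replicate m a}"
    then obtain t where g: "g = stairs i n (Suc j) @ replicate (m * t) a" "t \<le> 1"
      by (metis append_Nil2 empty_replicate insertE le_refl mult_0_right mult_1_right singletonD zero_le)
    then show "?R (cnt a (take s g)) (cnt b (take s g)) (cnt a g) (cnt b g) 1"
      using admissible_take_copy[OF assms(2,3), where r = "m * t" and s = s]
      by auto
  next
    fix \<alpha>1 \<beta>1 A1 B1 N1 \<alpha>2 \<beta>2 A2 B2 N2
    assume "?R \<alpha>1 \<beta>1 A1 B1 N1" "?R \<alpha>2 \<beta>2 A2 B2 N2"
    then show "?R (\<alpha>1 + \<alpha>2) (\<beta>1 + \<beta>2) (A1 + A2) (B1 + B2) (N1 + N2)"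
      using admissible_add by (auto simp: algebra_simps) (metis add_mult_distrib)
  qed simp
  then show ?thesis
    by blast
qed

lemma admissibleI_past_stairs:
  assumes "(i + n * j) * N \<le> \<alpha>" and "\<alpha> + m * j * N \<le> (i + n * j) * N + m * \<beta>"
    and "j * N \<le> \<beta>" and "\<beta> \<le> Suc j * N"
    and "i \<le> n" and "1 \<le> j \<longrightarrow> m \<le> n"
  shows "admissible i n j m N \<alpha> \<beta>"
proof -
  have D: "(i + n * j) * N = i * N + n * (j * N)"
    by (simp add: algebra_simps)
  have "i * \<beta> \<le> i * N + i * (j * N)"
    using mult_le_mono2[OF assms(4), of i] by (simp add: algebra_simps)
  moreover have "i * (j * N) \<le> n * (j * N)"
    using assms(5) by (rule mult_le_mono1)
  ultimately have "i * \<beta> \<le> \<alpha>"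
    using assms(1) D by linarith
  moreover have "n * \<beta> \<le> n * N + n * (j * N)"
    using mult_le_mono2[OF assms(4), of n] by (simp add: algebra_simps)
  then have "n * \<beta> + i * N \<le> \<alpha> + n * N"
    using assms(1) D by linarith
  moreover have "\<alpha> \<le> i * N + n * \<beta>" if "1 \<le> j"
  proof -
    obtain e where e: "\<beta> = j * N + e"
      using assms(3) le_Suc_ex by blast
    have "m * e \<le> n * e"
      using assms(6) that by simp
    moreover have "m * \<beta> = m * j * N + m * e" "n * \<beta> = n * (j * N) + n * e"
      by (simp_all add: e algebra_simps)
    ultimately show ?thesis
      using assms(2) D by linarith
  qed
  ultimately show ?thesis
    using assms(2) unfolding admissible_def by blast
qed

section \<open>Greedy distribution among copies\<close>

text \<open>The a's of a word are cut into consecutive blocks of lengths \<open>i * N\<close>, \<open>j\<close> times \<open>n * N\<close>,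
  and \<open>m * N\<close>, and copy \<open>k\<close> receives the \<open>k\<close>-th window of each block; the b's are dealt
  round robin. \<open>window_count c w k A\<close> is the number of the first \<open>A\<close> a's falling into the
  \<open>k\<close>-th window of width \<open>w\<close> after position \<open>c\<close>.\<close>

definition window_count :: "nat \<Rightarrow> nat \<Rightarrow> nat \<Rightarrow> nat \<Rightarrow> nat" where
  "window_count c w k A = min w (A - (c + k * w))"

lemma window_count_0 [simp]: "window_count c w k 0 = 0"
  by (simp add: window_count_def)

lemma window_count_mono: "A \<le> A' \<Longrightarrow> window_count c w k A \<le> window_count c w k A'"
  by (auto simp: window_count_def min_def)

lemma window_count_full: "c + k * w + w \<le> A \<Longrightarrow> window_count c w k A = w"
  by (simp add: window_count_def)

lemma window_count_empty: "A \<le> c + k * w \<Longrightarrow> window_count c w k A = 0"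
  by (simp add: window_count_def)

lemma sum_window_count: "(\<Sum>k<K. window_count c w k A) = min (K * w) (A - c)"
proof (induction K)
  case (Suc K)
  have "min (K * w) X + min w (X - K * w) = min (w + K * w) X" for X
    by (auto simp: min_def)
  with Suc show ?case
    by (simp add: window_count_def diff_diff_add)
qed simp

lemma unique_increment_of_sum:
  fixes f g :: "nat \<Rightarrow> nat"
  assumes le: "\<forall>k<N. f k \<le> g k" and sum: "(\<Sum>k<N. g k) = (\<Sum>k<N. f k) + 1"
  shows "\<exists>k0<N. g k0 = Suc (f k0) \<and> (\<forall>k<N. k \<noteq> k0 \<longrightarrow> g k = f k)"
proof -
  define d where "d k = g k - f k" for k
  have "(\<Sum>k<N. g k) = (\<Sum>k<N. f k + d k)"
    using le by (intro sum.cong) (auto simp: d_def)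
  then have d_sum: "(\<Sum>k<N. d k) = 1"
    using sum by (simp add: sum.distrib)
  then obtain k0 where k0: "k0 < N" "d k0 \<noteq> 0"
    by (metis lessThan_iff sum.neutral zero_neq_one)
  have "(\<Sum>k<N. d k) = d k0 + (\<Sum>k\<in>{..<N} - {k0}. d k)"
    using k0 by (simp add: sum.remove)
  then have "d k0 = 1" "(\<Sum>k\<in>{..<N} - {k0}. d k) = 0"
    using d_sum k0 by linarith+
  then have "d k0 = 1" "\<forall>k<N. k \<noteq> k0 \<longrightarrow> d k = 0"
    by simp_all
  with k0(1) le show ?thesis
    unfolding d_def by (intro exI[of _ k0]) fastforce
qed

context
  fixes i n j m N :: nat
begin

definition a_share :: "nat \<Rightarrow> nat \<Rightarrow> nat" where
  "a_share k A = window_count 0 i k A + (\<Sum>g<j. window_count (i * N + g * (n * N)) n k A)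
     + window_count ((i + n * j) * N) m k A"

definition b_share :: "nat \<Rightarrow> nat \<Rightarrow> nat" where
  "b_share k B = B div N + (if k < B mod N then 1 else 0)"

lemma a_share_0 [simp]: "a_share k 0 = 0"
  by (simp add: a_share_def)

lemma b_share_0 [simp]: "b_share k 0 = 0"
  by (simp add: b_share_def)

lemma a_share_mono: "A \<le> A' \<Longrightarrow> a_share k A \<le> a_share k A'"
  unfolding a_share_def by (intro add_mono sum_mono window_count_mono)

lemma sum_a_share:
  assumes "A \<le> (i + n * j) * N + m * N"
  shows "(\<Sum>k<N. a_share k A) = A"
proof -
  have "(\<Sum>k<N. \<Sum>g<j. window_count (i * N + g * (n * N)) n k A)
      = (\<Sum>g<j. \<Sum>k<N. window_count (i * N + g * (n * N)) n k A)"
    by (rule sum.swap)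
  also have "\<dots> = (\<Sum>g<j. window_count (i * N) (n * N) g A)"
  proof (rule sum.cong)
    show "(\<Sum>k<N. window_count (i * N + g * (n * N)) n k A) = window_count (i * N) (n * N) g A" for g
      unfolding sum_window_count by (simp add: window_count_def mult.commute)
  qed simp
  also have "\<dots> = min (j * (n * N)) (A - i * N)"
    by (simp add: sum_window_count)
  finally have "(\<Sum>k<N. a_share k A)
      = min (N * i) A + min (j * (n * N)) (A - i * N) + min (N * m) (A - (i + n * j) * N)"
    unfolding a_share_def by (simp add: sum.distrib sum_window_count)
  moreover have "(i + n * j) * N = i * N + j * (n * N)"
    by (simp add: algebra_simps)
  ultimately show ?thesis
    using assms by (simp add: min_def mult.commute) arith
qed

lemma b_share_Suc:
  assumes "k < N"
  shows "b_share k (Suc B) = b_share k B + (if k = B mod N then 1 else 0)"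
proof (cases "Suc (B mod N) = N")
  case True
  then have "Suc B mod N = 0" "Suc B div N = Suc (B div N)"
    using mod_Suc[of B N] div_Suc[of B N] by auto
  with True assms show ?thesis
    unfolding b_share_def by auto
next
  case False
  then have "Suc B mod N = Suc (B mod N)" "Suc B div N = B div N"
    using mod_Suc[of B N] div_Suc[of B N] by auto
  with False assms show ?thesis
    unfolding b_share_def by auto
qed

lemma a_share_eq:
  assumes "k * i + i \<le> A" and "\<beta> \<le> j"
    and "\<And>g. g < \<beta> \<Longrightarrow> i * N + g * (n * N) + k * n + n \<le> A"
    and "\<And>g. \<beta> \<le> g \<Longrightarrow> g < j \<Longrightarrow> A \<le> i * N + g * (n * N) + k * n"
  shows "a_share k A = i + n * \<beta> + window_count ((i + n * j) * N) m k A"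
proof -
  have "window_count (i * N + g * (n * N)) n k A = (if g < \<beta> then n else 0)" if "g < j" for g
    using assms(3,4)[of g] that by (auto intro: window_count_full window_count_empty)
  moreover have "{g \<in> {..<j}. g < \<beta>} = {..<\<beta>}"
    using assms(2) by auto
  ultimately have "(\<Sum>g<j. window_count (i * N + g * (n * N)) n k A) = n * \<beta>"
    by (simp add: sum.inter_filter[symmetric])
  with assms(1) show ?thesis
    unfolding a_share_def by (simp add: window_count_full[of 0])
qed

lemma a_share_at_next_b:
  assumes k: "k < N" and \<beta>: "\<beta> \<le> j" and B: "B = \<beta> * N + k"
    and L1: "i * Suc B \<le> A" and L2: "n * Suc B + i * N \<le> A + n * N"
    and U1: "1 \<le> j \<longrightarrow> A \<le> i * N + n * B" and U2: "A + m * j * N \<le> (i + n * j) * N + m * B"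
  shows "a_share k A = i + n * \<beta>"
proof -
  have nB: "n * B = \<beta> * (n * N) + k * n"
    using B by (simp add: algebra_simps)
  have "i * Suc k \<le> i * Suc B"
    using B by (intro mult_le_mono2) simp
  then have "k * i + i \<le> A"
    using order_trans[OF _ L1] by (simp add: mult.commute)
  moreover have "i * N + g * (n * N) + k * n + n \<le> A" if "g < \<beta>" for g
  proof -
    have "Suc g * (n * N) \<le> \<beta> * (n * N)"
      using that by (intro mult_le_mono1) simp
    with L2 nB show ?thesis
      by simp
  qed
  moreover have "A \<le> i * N + g * (n * N) + k * n" if "\<beta> \<le> g" "g < j" for g
  proof -
    have "\<beta> * (n * N) \<le> g * (n * N)"
      using that by (intro mult_le_mono1) simp
    moreover have "A \<le> i * N + n * B"
      using U1 that by simp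
    ultimately show ?thesis
      using nB by linarith
  qed
  moreover have "A \<le> (i + n * j) * N + k * m"
  proof (cases "\<beta> = j")
    case True
    with U2 B show ?thesis
      by (simp add: algebra_simps)
  next
    case False
    with \<beta> k have "Suc \<beta> * (n * N) \<le> j * (n * N)" "Suc k * n \<le> N * n"
      by (intro mult_le_mono1; simp)+
    with U1 nB False \<beta> show ?thesis
      by (simp add: algebra_simps)
  qed
  ultimately show ?thesis
    by (simp add: a_share_eq[OF _ \<beta>] window_count_empty)
qed

lemma a_share_next_b:
  assumes "admissible i n j m N A B" and "admissible i n j m N A (Suc B)" and "Suc B \<le> Suc j * N"
  shows "a_share (B mod N) A = i + n * (B div N)"
proof (rule a_share_at_next_b)
  show "B mod N < N"
    using assms(3) by (cases N) auto
  then have "B div N * N < Suc j * N"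
    using div_times_less_eq_dividend[of B N] assms(3) by linarith
  then show "B div N \<le> j"
    by (metis less_Suc_eq_le mult_less_cancel2)
qed (use assms(1,2) in \<open>auto simp: admissible_def\<close>)

lemma a_share_final:
  assumes "k < N" and "t \<le> N"
  shows "a_share k ((i + n * j) * N + m * t) = i + n * j + (if k < t then m else 0)"
proof -
  define A where "A = (i + n * j) * N + m * t"
  have D: "(i + n * j) * N = i * N + j * (n * N)"
    by (simp add: algebra_simps)
  have "Suc k * i \<le> N * i" "Suc k * n \<le> N * n"
    using assms(1) by (intro mult_le_mono1; simp)+
  then have "k * i + i \<le> A" "k * n + n \<le> n * N"
    by (simp_all add: A_def D algebra_simps)
  moreover have "i * N + g * (n * N) + k * n + n \<le> A" if "g < j" for g
  proof -
    have "Suc g * (n * N) \<le> j * (n * N)"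
      using that by (intro mult_le_mono1) simp
    with \<open>k * n + n \<le> n * N\<close> show ?thesis
      unfolding A_def D by simp
  qed
  ultimately have "a_share k A = i + n * j + window_count ((i + n * j) * N) m k A"
    by (intro a_share_eq) auto
  moreover have "Suc k * m \<le> t * m" if "k < t"
    using that by (intro mult_le_mono1) simp
  moreover have "t * m \<le> k * m" if "\<not> k < t"
    using that by (intro mult_le_mono1) simp
  ultimately show ?thesis
    by (auto simp: A_def window_count_def mult.commute)
qed

lemma b_share_final: "k < N \<Longrightarrow> b_share k (Suc j * N) = Suc j"
  by (simp add: b_share_def)

definition copies :: "nat \<Rightarrow> nat \<Rightarrow> word list" where
  "copies A B = map (\<lambda>k. stairs_prefix i n (a_share k A) (b_share k B)) [0..<N]"

text \<open>The invariant of the greedy distribution: besides being a shuffle of the partial copies,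
  every copy has already received all the a's that precede its last b.\<close>

definition distributed :: "word \<Rightarrow> bool" where
  "distributed x \<longleftrightarrow> x \<in> shuffles_of (copies (cnt a x) (cnt b x)) \<and>
     (\<forall>k<N. cnt a (stairs i n (b_share k (cnt b x))) \<le> a_share k (cnt a x))"

lemma distributed_Nil: "distributed []"
  by (simp add: distributed_def copies_def stairs_prefix_def map_replicate_const
      Nil_in_shuffles_of_replicate)

lemma shuffles_of_copies_snoc:
  assumes "x \<in> shuffles_of (copies A B)" and "k0 < N"
    and "stairs_prefix i n (a_share k0 A') (b_share k0 B')
      = stairs_prefix i n (a_share k0 A) (b_share k0 B) @ [c]"
    and "\<forall>k<N. k \<noteq> k0 \<longrightarrow> a_share k A' = a_share k A \<and> b_share k B' = b_share k B"
  shows "x @ [c] \<in> shuffles_of (copies A' B')"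
proof -
  have "copies A' B' = (copies A B)[k0 := copies A B ! k0 @ [c]]"
    using assms(2-4) by (intro nth_equalityI) (auto simp: copies_def nth_list_update)
  then show ?thesis
    using snoc_in_shuffles_of[OF assms(1)] assms(2) by (simp add: copies_def)
qed

lemma distributed_snoc_a:
  assumes "distributed x" and "Suc (cnt a x) \<le> (i + n * j) * N + m * N"
  shows "distributed (x @ [a])"
proof -
  let ?A = "cnt a x" and ?B = "cnt b x"
  have mono: "\<forall>k<N. a_share k ?A \<le> a_share k (Suc ?A)"
    by (simp add: a_share_mono)
  have "(\<Sum>k<N. a_share k (Suc ?A)) = (\<Sum>k<N. a_share k ?A) + 1"
    using sum_a_share assms(2) by simp
  then obtain k0 where k0: "k0 < N" "a_share k0 (Suc ?A) = Suc (a_share k0 ?A)"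
    "\<forall>k<N. k \<noteq> k0 \<longrightarrow> a_share k (Suc ?A) = a_share k ?A"
    using unique_increment_of_sum[OF mono] by blast
  with assms(1) have "x @ [a] \<in> shuffles_of (copies (Suc ?A) ?B)"
    by (intro shuffles_of_copies_snoc) (auto simp: distributed_def stairs_prefix_snoc_a)
  with assms(1) mono show ?thesis
    unfolding distributed_def by (auto intro: order_trans)
qed

lemma distributed_snoc_b:
  assumes "distributed x" and "admissible i n j m N (cnt a x) (cnt b x)"
    and "admissible i n j m N (cnt a x) (Suc (cnt b x))" and "Suc (cnt b x) \<le> Suc j * N"
  shows "distributed (x @ [b])"
proof -
  let ?A = "cnt a x" and ?B = "cnt b x"
  define k0 where "k0 = ?B mod N"
  have "0 < N"
    using assms(4) by (cases N) auto
  then have k0: "k0 < N"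
    by (simp add: k0_def)
  have share: "a_share k0 ?A = i + n * (?B div N)" "b_share k0 ?B = ?B div N"
    using a_share_next_b[OF assms(2-4)] by (simp_all add: k0_def b_share_def)
  have b_share: "b_share k (Suc ?B) = b_share k ?B + (if k = k0 then 1 else 0)" if "k < N" for k
    using b_share_Suc[OF that] by (simp add: k0_def)
  have "x @ [b] \<in> shuffles_of (copies ?A (Suc ?B))"
    using assms(1) k0 by (intro shuffles_of_copies_snoc) (auto simp: distributed_def b_share share
        stairs_prefix_snoc_b)
  moreover have "cnt a (stairs i n (b_share k (Suc ?B))) \<le> a_share k ?A" if "k < N" for k
    using assms(1) that share by (cases "k = k0") (auto simp: distributed_def b_share)
  ultimately show ?thesis
    by (simp add: distributed_def)
qed

lemma distributed_if_admissible:
  assumes "cnt a u \<le> (i + n * j) * N + m * N" and "cnt b u \<le> Suc j * N"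
    and "\<forall>s. admissible i n j m N (cnt a (take s u)) (cnt b (take s u))"
  shows "distributed u"
  using assms
proof (induction u rule: rev_induct)
  case (snoc c x)
  have "take s x = take (min s (length x)) (x @ [c])" for s
    by (simp add: min_def)
  with snoc.prems have "distributed x"
    by (intro snoc.IH) (auto simp del: take_append)
  moreover have "admissible i n j m N (cnt a x) (cnt b x)"
    "admissible i n j m N (cnt a (x @ [c])) (cnt b (x @ [c]))"
    using snoc.prems(3)[rule_format, of "length x"] snoc.prems(3)[rule_format, of "Suc (length x)"]
    by simp_all
  ultimately show ?case
    using snoc.prems(1,2) by (cases c) (auto intro: distributed_snoc_a distributed_snoc_b)
qed (simp add: distributed_Nil)

lemma copies_final:
  assumes "t \<le> N"
  shows "copies ((i + n * j) * N + m * t) (Suc j * N)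
    = map (\<lambda>k. stairs i n (Suc j) @ replicate (if k < t then m else 0) a) [0..<N]"
  unfolding copies_def using a_share_final[OF _ assms] b_share_final
  by (intro map_cong) (auto simp: stairs_prefix_def)

lemma shuffles_of_copies_if_admissible:
  assumes count_b: "cnt b u = Suc j * N" and count_a: "cnt a u = (i + n * j) * N + m * t"
    and adm: "\<forall>s. admissible i n j m N (cnt a (take s u)) (cnt b (take s u))"
  shows "u \<in> shuffles_of (map (\<lambda>k. stairs i n (Suc j) @ replicate (if k < t then m else 0) a) [0..<N])"
proof -
  txt \<open>If \<open>m = 0\<close> the value of \<open>t\<close> is irrelevant; otherwise the last admissibility
    inequality, applied to the whole word, gives \<open>t \<le> N\<close>.\<close>
  define t' where "t' = (if m = 0 then 0 else t)"
  have "m * t \<le> m * N"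
    using adm[rule_format, of "length u"] count_a count_b by (simp add: admissible_def algebra_simps)
  then have t': "t' \<le> N" "cnt a u = (i + n * j) * N + m * t'"
    using count_a by (auto simp: t'_def)
  with count_b adm have "distributed u"
    by (intro distributed_if_admissible) (simp_all add: mult_le_mono2)
  then have "u \<in> shuffles_of (copies ((i + n * j) * N + m * t') (Suc j * N))"
    using t'(2) count_b by (simp add: distributed_def)
  then have "u \<in> shuffles_of (map (\<lambda>k. stairs i n (Suc j) @ replicate (if k < t' then m else 0) a) [0..<N])"
    unfolding copies_final[OF t'(1)] .
  moreover have "map (\<lambda>k. stairs i n (Suc j) @ replicate (if k < t' then m else 0) a) [0..<N]
      = map (\<lambda>k. stairs i n (Suc j) @ replicate (if k < t then m else 0) a) [0..<N]"
    by (auto simp: t'_def)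
  ultimately show ?thesis
    by simp
qed

end

section \<open>The component languages\<close>

lemma L_eps_stairs_iff:
  assumes "i \<le> n" and "1 \<le> j \<longrightarrow> m \<le> n"
  shows "u \<in> L_eps {stairs i n (Suc j), stairs i n (Suc j) @ replicate m a} \<longleftrightarrow>
    (\<exists>N t. cnt b u = Suc j * N \<and> cnt a u = (i + n * j) * N + m * t \<and>
      (\<forall>s. admissible i n j m N (cnt a (take s u)) (cnt b (take s u))))"
proof
  assume "u \<in> L_eps {stairs i n (Suc j), stairs i n (Suc j) @ replicate m a}"
  then show "\<exists>N t. cnt b u = Suc j * N \<and> cnt a u = (i + n * j) * N + m * t \<and>
      (\<forall>s. admissible i n j m N (cnt a (take s u)) (cnt b (take s u)))"
    using L_eps_stairs_admissible assms by blast
next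
  assume "\<exists>N t. cnt b u = Suc j * N \<and> cnt a u = (i + n * j) * N + m * t \<and>
      (\<forall>s. admissible i n j m N (cnt a (take s u)) (cnt b (take s u)))"
  then obtain N t where "cnt b u = Suc j * N" "cnt a u = (i + n * j) * N + m * t"
    "\<forall>s. admissible i n j m N (cnt a (take s u)) (cnt b (take s u))"
    by blast
  then have "u \<in> shuffles_of
      (map (\<lambda>k. stairs i n (Suc j) @ replicate (if k < t then m else 0) a) [0..<N])"
    by (rule shuffles_of_copies_if_admissible)
  then show "u \<in> L_eps {stairs i n (Suc j), stairs i n (Suc j) @ replicate m a}"
    by (rule shuffles_of_in_L_eps) auto
qed

lemma admissible_take_append:
  assumes "\<forall>s. admissible i n j m N (cnt a (take s x)) (cnt b (take s x))"
    and "cnt a x = (i + n * j) * N" and "j * N \<le> cnt b x" and "cnt b (x @ v) \<le> Suc j * N"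
    and "\<forall>s. cnt a (take s v) \<le> m * (cnt b x - j * N + cnt b (take s v))"
    and "i \<le> n" and "1 \<le> j \<longrightarrow> m \<le> n"
  shows "admissible i n j m N (cnt a (take s (x @ v))) (cnt b (take s (x @ v)))"
proof (cases "s \<le> length x")
  case True
  with assms(1) show ?thesis
    by simp
next
  case False
  define v' where "v' = take (s - length x) v"
  obtain e where e: "cnt b x = j * N + e"
    using assms(3) le_Suc_ex by blast
  have "cnt a v' \<le> m * (cnt b x - j * N + cnt b v')"
    using assms(5) by (simp add: v'_def)
  then have "cnt a (x @ v') + m * j * N \<le> (i + n * j) * N + m * cnt b (x @ v')"
    using e assms(2) by (simp add: algebra_simps)
  moreover have "cnt b (x @ v') \<le> Suc j * N"
    using assms(4) cnt_take_le[of b "s - length x" v] by (simp add: v'_def)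
  moreover have "take s (x @ v) = x @ v'"
    using False by (simp add: v'_def)
  ultimately show ?thesis
    using assms(2,3,6,7) by (intro admissibleI_past_stairs) simp_all
qed

lemma append_b_suffix_cases:
  assumes "g1 @ g2 = Y @ [a, b]" and "set g2 \<subseteq> {b}"
  shows "g1 = Y @ [a, b] \<or> g1 = Y @ [a]"
proof (cases g2 rule: rev_cases)
  case (snoc g2' c)
  with assms(1) have g1: "g1 @ g2' = Y @ [a]"
    by simp
  show ?thesis
  proof (cases g2' rule: rev_cases)
    case (snoc g2'' d)
    with g1 have "d = a"
      by (metis append_assoc append1_eq_conv)
    moreover have "d \<in> set g2"
      using snoc \<open>g2 = g2' @ [c]\<close> by simp
    ultimately show ?thesis
      using assms(2) by auto
  qed (use g1 in simp)
qed (use assms in simp)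

lemma L_eps_drop_trailing_b:
  assumes "z \<in> L_eps {Y @ [a, b]}" and "z = x @ replicate q b"
  shows "x \<in> L_eps {Y @ [a, b], Y @ [a]}"
  using assms
proof (induction arbitrary: x q rule: L_eps_induct)
  case (step y g z)
  then have "x @ replicate q b \<in> shuffles y g" and g: "g = Y @ [a, b]"
    by blast+
  then obtain y1 y2 g1 g2 where split: "y = y1 @ y2" "g = g1 @ g2" "x \<in> shuffles y1 g1"
    "replicate q b \<in> shuffles y2 g2"
    by (blast dest: append_in_shuffles_split)
  then have "set y2 \<subseteq> {b}" "set g2 \<subseteq> {b}"
    using set_shuffles[OF split(4)] by (auto simp del: set_replicate)
  then have "y = y1 @ replicate (length y2) b" "g1 \<in> {Y @ [a, b], Y @ [a]}"
    using split(1,2) g append_b_suffix_cases[of g1 g2 Y] replicate_length_same[of y2 b] by (simp add: subset_iff)+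
  with step.IH split(3) show ?case
    by (blast intro: L_eps_step)
qed simp

lemma L_eps_stairs_butlast_admissible:
  assumes "u \<in> L_eps {Y @ [a, b], Y @ [a]}"
    and "i \<le> n" and "1 \<le> j \<longrightarrow> m \<le> n" and W: "stairs i n (Suc j) = Y @ [a, b]"
  shows "\<exists>N. cnt a u = (i + n * j) * N \<and> j * N \<le> cnt b u \<and> cnt b u \<le> Suc j * N \<and>
    (\<forall>s. admissible i n j m N (cnt a (take s u)) (cnt b (take s u)))"
proof -
  let ?R = "\<lambda>\<alpha> \<beta> A B N. admissible i n j m N \<alpha> \<beta> \<and> A = (i + n * j) * N \<and> j * N \<le> B \<and> B \<le> Suc j * N"
  have "\<exists>N. \<forall>s. ?R (cnt a (take s u)) (cnt b (take s u)) (cnt a u) (cnt b u) N"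
  proof (rule L_eps_additive_invariant[OF assms(1)])
    fix g s
    assume "g \<in> {Y @ [a, b], Y @ [a]}"
    then have g: "g = take (length g) (Y @ [a, b])" "cnt a g = i + n * j" "j \<le> cnt b g" "cnt b g \<le> Suc j"
      using arg_cong[OF W, of "cnt a"] arg_cong[OF W, of "cnt b"] by auto
    have "admissible i n j m 1 (cnt a (take s' (Y @ [a, b]))) (cnt b (take s' (Y @ [a, b])))" for s'
      using admissible_take_copy[of i n j m 0 s'] assms(2,3) unfolding W by simp
    from this[of "min s (length g)"] g show "?R (cnt a (take s g)) (cnt b (take s g)) (cnt a g) (cnt b g) 1"
      by (metis mult_1_right take_take)
  qed (auto simp: admissible_add algebra_simps)
  then show ?thesis
    by blast
qed

lemma L_eps_stairs_butlast_iff: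
  assumes "i \<le> n" and "1 \<le> j \<longrightarrow> m \<le> n" and W: "stairs i n (Suc j) = Y @ [a, b]"
  shows "u \<in> L_eps {Y @ [a, b], Y @ [a]} \<longleftrightarrow>
    (\<exists>N. cnt a u = (i + n * j) * N \<and> j * N \<le> cnt b u \<and> cnt b u \<le> Suc j * N \<and>
      (\<forall>s. admissible i n j m N (cnt a (take s u)) (cnt b (take s u))))"
proof
  assume "\<exists>N. cnt a u = (i + n * j) * N \<and> j * N \<le> cnt b u \<and> cnt b u \<le> Suc j * N \<and>
      (\<forall>s. admissible i n j m N (cnt a (take s u)) (cnt b (take s u)))"
  then obtain N where u: "cnt a u = (i + n * j) * N" "j * N \<le> cnt b u" "cnt b u \<le> Suc j * N"
    "\<forall>s. admissible i n j m N (cnt a (take s u)) (cnt b (take s u))"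
    by blast
  txt \<open>Pad with b's up to \<open>Suc j * N\<close> b's: this gives a shuffle of \<open>N\<close> full copies.\<close>
  define x where "x = u @ replicate (Suc j * N - cnt b u) b"
  have "\<forall>s. admissible i n j m N (cnt a (take s x)) (cnt b (take s x))"
    unfolding x_def using u assms(1,2)
    by (intro allI admissible_take_append) (simp_all add: take_replicate)
  moreover have "cnt b x = Suc j * N" "cnt a x = (i + n * j) * N + m * 0"
    using u by (simp_all add: x_def)
  ultimately have "x \<in> shuffles_of (map (\<lambda>k. stairs i n (Suc j) @ replicate (if k < 0 then m else 0) a) [0..<N])"
    by (intro shuffles_of_copies_if_admissible)
  then have "x \<in> L_eps {Y @ [a, b]}"
    by (rule shuffles_of_in_L_eps) (auto simp: W)
  then show "u \<in> L_eps {Y @ [a, b], Y @ [a]}"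
    using L_eps_drop_trailing_b x_def by blast
qed (use L_eps_stairs_butlast_admissible assms in blast)

lemma b_block_in_shuffles:
  "m \<le> r \<Longrightarrow> y @ b # replicate r a \<in> shuffles (y @ replicate (r - m) a) (b # replicate m a)"
proof -
  assume "m \<le> r"
  have "(b # replicate m a) @ replicate (r - m) a \<in> shuffles (replicate (r - m) a) (b # replicate m a)"
    using append_in_shuffles shuffles_commutes by metis
  with \<open>m \<le> r\<close> show ?thesis
    using shuffles_append[OF append_in_shuffles[of y "[]"]] by (simp add: replicate_add[symmetric])
qed

lemma L_eps_b_am_a_if_suffix_bound:
  assumes "\<forall>s. m * cnt b (drop s x) \<le> cnt a (drop s x)"
  shows "x \<in> L_eps {b # replicate m a, [a]}"
  using assms
proof (induction "length x" arbitrary: x rule: less_induct)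
  case less
  show ?case
  proof (cases "b \<in> set x")
    case False
    then have "x = replicate (length x) a"
      by (metis letter.exhaust replicate_length_same)
    then show ?thesis
      by (metis insertCI replicate_in_L_eps)
  next
    case True
    txt \<open>Remove the last b together with \<open>m\<close> of the a's following it.\<close>
    then obtain y z where "x = y @ b # z" "b \<notin> set z"
      by (meson split_list_last)
    then obtain r where x: "x = y @ b # replicate r a"
      by (metis letter.exhaust replicate_length_same)
    have "m * cnt b (drop (length y) x) \<le> cnt a (drop (length y) x)"
      using less.prems by blast
    then have rm: "m \<le> r"
      using x by simp
    define x' where "x' = y @ replicate (r - m) a"
    have "\<forall>s. m * cnt b (drop s x') \<le> cnt a (drop s x')"
    proof
      fix s
      show "m * cnt b (drop s x') \<le> cnt a (drop s x')"
      proof (cases "s \<le> length y")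
        case True
        have "m * cnt b (drop s x) \<le> cnt a (drop s x)"
          using less.prems by blast
        with True x rm show ?thesis
          unfolding x'_def by (simp add: algebra_simps)
      qed (simp add: x'_def)
    qed
    moreover have "length x' < length x"
      using x by (simp add: x'_def)
    ultimately have x': "x' \<in> L_eps {b # replicate m a, [a]}"
      using less.hyps by blast
    with b_block_in_shuffles[OF rm, of y] show ?thesis
      unfolding x x'_def by (blast intro: L_eps_step)
  qed
qed

lemma L_eps_b_am_a_iff:
  "u \<in> L_eps {b # replicate m a, [a]} \<longleftrightarrow> (\<forall>s. m * cnt b (drop s u) \<le> cnt a (drop s u))"
proof
  assume "u \<in> L_eps {b # replicate m a, [a]}"
  then have "\<exists>N::nat. \<forall>s. m * cnt b u + cnt a (take s u) \<le> cnt a u + m * cnt b (take s u)"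
  proof (rule L_eps_additive_invariant)
    fix g s
    assume "g \<in> {b # replicate m a, [a]}"
    then show "m * cnt b g + cnt a (take s g) \<le> cnt a g + m * cnt b (take s g)"
      by (cases s) auto
  next
    fix \<alpha>1 \<beta>1 A1 B1 \<alpha>2 \<beta>2 A2 B2 :: nat
    assume "m * B1 + \<alpha>1 \<le> A1 + m * \<beta>1" "m * B2 + \<alpha>2 \<le> A2 + m * \<beta>2"
    then show "m * (B1 + B2) + (\<alpha>1 + \<alpha>2) \<le> A1 + A2 + m * (\<beta>1 + \<beta>2)"
      by (simp add: distrib_left)
  qed simp
  then have inv: "m * cnt b u + cnt a (take s u) \<le> cnt a u + m * cnt b (take s u)" for s
    by simp
  show "\<forall>s. m * cnt b (drop s u) \<le> cnt a (drop s u)"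
  proof
    fix s
    have "cnt x u = cnt x (take s u) + cnt x (drop s u)" for x
      by (metis append_take_drop_id cnt_append)
    with inv[of s] show "m * cnt b (drop s u) \<le> cnt a (drop s u)"
      by (simp add: distrib_left)
  qed
qed (rule L_eps_b_am_a_if_suffix_bound)
lemma L_eps_b_am_b_iff:
  "u \<in> L_eps {b # replicate m a, [b]} \<longleftrightarrow>
    m dvd cnt a u \<and> (\<forall>s. cnt a (take s u) \<le> m * cnt b (take s u))"
proof
  assume "u \<in> L_eps {b # replicate m a, [b]}"
  then have "\<exists>N::nat. \<forall>s. cnt a (take s u) \<le> m * cnt b (take s u) \<and> m dvd cnt a u"
  proof (rule L_eps_additive_invariant)
    fix g s
    assume "g \<in> {b # replicate m a, [b]}"
    then show "cnt a (take s g) \<le> m * cnt b (take s g) \<and> m dvd cnt a g"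
      by (cases s) auto
  qed (auto simp: distrib_left intro: dvd_add)
  then show "m dvd cnt a u \<and> (\<forall>s. cnt a (take s u) \<le> m * cnt b (take s u))"
    by simp
next
  assume u: "m dvd cnt a u \<and> (\<forall>s. cnt a (take s u) \<le> m * cnt b (take s u))"
  txt \<open>This is the case \<open>i = 0\<close>, \<open>n = 1\<close>, \<open>j = 0\<close> of the greedy distribution, where
    \<open>stairs 0 1 1 = [b]\<close>.\<close>
  have "\<forall>s. admissible 0 1 0 m (cnt b u) (cnt a (take s u)) (cnt b (take s u))"
    using u cnt_take_le[of b _ u] by (auto simp: admissible_def trans_le_add2)
  moreover have "cnt a u = (0 + 1 * 0) * cnt b u + m * (cnt a u div m)"
    using u by simp
  ultimately have "u \<in> shuffles_of
      (map (\<lambda>k. stairs 0 1 (Suc 0) @ replicate (if k < cnt a u div m then m else 0) a) [0..<cnt b u])"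
    by (intro shuffles_of_copies_if_admissible) simp_all
  then show "u \<in> L_eps {b # replicate m a, [b]}"
    by (rule shuffles_of_in_L_eps) (auto simp: stairs_Suc)
qed

section \<open>Decomposition\<close>

lemma split_at_min_excess:
  "\<exists>x y. r = x @ y \<and> (\<forall>s. m * cnt b (drop s x) \<le> cnt a (drop s x))
     \<and> (\<forall>s. cnt a (take s y) \<le> m * cnt b (take s y))"
proof -
  define F where "F k = int (m * cnt b (take k r)) - int (cnt a (take k r))" for k
  define k0 where "k0 = arg_min_on F {..length r}"
  have k0: "k0 \<le> length r" and min: "\<And>k. k \<le> length r \<Longrightarrow> F k0 \<le> F k"
    using arg_min_if_finite(1)[of "{..length r}" F] arg_min_least[of "{..length r}" _ F]
    by (auto simp: k0_def)
  define x y where "x = take k0 r" and "y = drop k0 r"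
  have "m * cnt b (drop s x) \<le> cnt a (drop s x)" if "s \<le> k0" for s
  proof -
    have "cnt c x = cnt c (take s r) + cnt c (drop s x)" for c
      using that by (metis append_take_drop_id cnt_append take_take min_absorb1 x_def)
    with min[of s] that k0 show ?thesis
      by (simp add: F_def x_def algebra_simps) (simp flip: of_nat_mult)
  qed
  then have "m * cnt b (drop s x) \<le> cnt a (drop s x)" for s
    by (cases "s \<le> k0") (auto simp: x_def)
  moreover have "cnt a (take s y) \<le> m * cnt b (take s y)" for s
  proof -
    define s' where "s' = min s (length y)"
    have "take (k0 + s') r = x @ take s' y"
      by (simp add: x_def y_def take_add)
    moreover have "k0 + s' \<le> length r"
      using k0 by (simp add: s'_def y_def)
    ultimately have "cnt a (take s' y) \<le> m * cnt b (take s' y)"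
      using min[of "k0 + s'"] by (simp add: F_def x_def algebra_simps) (simp flip: of_nat_mult)
    then show ?thesis
      by (cases "s \<le> length y") (simp_all add: s'_def)
  qed
  ultimately show ?thesis
    by (metis append_take_drop_id x_def y_def)
qed

lemma split_off_remainder:
  assumes "\<forall>s. cnt a (take s y) \<le> m * cnt b (take s y)"
  shows "\<exists>y1 y2. y = y1 @ y2 \<and> m dvd cnt a y1 \<and> (\<forall>s. cnt a (take s y1) \<le> m * cnt b (take s y1))
    \<and> cnt a y2 = cnt a y mod m"
proof -
  obtain s where s: "cnt a (take s y) = m * (cnt a y div m)"
    using ex_take_cnt_eq[of "m * (cnt a y div m)" a y] by auto
  then have "m dvd cnt a (take s y)"
    by simp
  moreover have "cnt a y = cnt a (take s y) + cnt a (drop s y)"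
    by (metis append_take_drop_id cnt_append)
  with s have "cnt a (drop s y) = cnt a y mod m"
    by (metis add_diff_cancel_left' minus_div_mult_eq_mod mult.commute)
  moreover have "cnt a (take k (take s y)) \<le> m * cnt b (take k (take s y))" for k
    using assms by simp
  ultimately show ?thesis
    by (metis append_take_drop_id)
qed

lemma tail_decomposition:
  assumes "0 < m" and "\<forall>s. cnt a (take s r) \<le> m * (p + cnt b (take s r))" and "m dvd cnt a r"
  shows "\<exists>u2 u3 u4. r = u2 @ u3 @ u4 \<and> (\<forall>s. m * cnt b (drop s u2) \<le> cnt a (drop s u2))
    \<and> m dvd cnt a u3 \<and> (\<forall>s. cnt a (take s u3) \<le> m * cnt b (take s u3))
    \<and> cnt a u4 < m \<and> cnt a (u2 @ u4) mod m = 0 \<and> cnt a u2 + cnt a u4 \<le> m * (p + cnt b u2)"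
proof -
  obtain u2 y where r: "r = u2 @ y" and u2: "\<forall>s. m * cnt b (drop s u2) \<le> cnt a (drop s u2)"
    and y: "\<forall>s. cnt a (take s y) \<le> m * cnt b (take s y)"
    using split_at_min_excess by blast
  obtain u3 u4 where y_eq: "y = u3 @ u4" and u3: "m dvd cnt a u3"
    "\<forall>s. cnt a (take s u3) \<le> m * cnt b (take s u3)" and u4: "cnt a u4 = cnt a y mod m"
    using split_off_remainder[OF y] by blast
  have u4_less: "cnt a u4 < m"
    using assms(1) u4 by simp
  have "m dvd cnt a u2 + cnt a u4"
    using assms(3) u3(1) unfolding r y_eq by (metis add.left_commute cnt_append dvd_add_right_iff)
  then obtain c where c: "cnt a u2 + cnt a u4 = m * c"
    by blast
  have "cnt a u2 \<le> m * (p + cnt b u2)"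
    using assms(2)[rule_format, of "length u2"] r by simp
  with c u4_less have "m * c < m * (p + cnt b u2 + 1)"
    by (simp add: algebra_simps)
  then have "m * c \<le> m * (p + cnt b u2)"
    by (simp only: mult_less_cancel1 mult_le_cancel1) linarith
  with r y_eq u2 u3 u4_less c show ?thesis
    by (intro exI[of _ u2] exI[of _ u3] exI[of _ u4]) simp
qed

lemma tail_bound:
  assumes u2: "\<forall>s. m * cnt b (drop s u2) \<le> cnt a (drop s u2)"
    and u3: "\<forall>s. cnt a (take s u3) \<le> m * cnt b (take s u3)"
    and bound: "cnt a u2 + cnt a u4 \<le> m * (p + cnt b u2)"
  shows "cnt a (take s (u2 @ u3 @ u4)) \<le> m * (p + cnt b (take s (u2 @ u3 @ u4)))"
proof -
  consider "s \<le> length u2" | "length u2 < s" "s \<le> length u2 + length u3"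
    | "length u2 + length u3 < s"
    by linarith
  then show ?thesis
  proof cases
    case 1
    have "cnt x u2 = cnt x (take s u2) + cnt x (drop s u2)" for x
      by (metis append_take_drop_id cnt_append)
    with u2[rule_format, of s] bound 1 show ?thesis
      by (simp add: algebra_simps)
  next
    case 2
    with u3[rule_format, of "s - length u2"] bound show ?thesis
      by (simp add: algebra_simps)
  next
    case 3
    with u3[rule_format, of "length u3"] bound cnt_take_le[of a "s - length u2 - length u3" u4]
    show ?thesis
      by (simp add: algebra_simps)
  qed
qed

lemma admissible_head_split:
  assumes adm: "\<forall>s. admissible i n j m N (cnt a (take s u)) (cnt b (take s u))"
    and count_a: "cnt a u = (i + n * j) * N + m * t" and "0 < m"
  shows "\<exists>u1 r. u = u1 @ r \<and> cnt a u1 = (i + n * j) * N \<and> j * N \<le> cnt b u1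
    \<and> (\<forall>s. admissible i n j m N (cnt a (take s u1)) (cnt b (take s u1)))
    \<and> (\<forall>s. cnt a (take s r) \<le> m * (cnt b u1 - j * N + cnt b (take s r))) \<and> cnt a r = m * t"
proof -
  obtain s1 where s1: "cnt a (take s1 u) = (i + n * j) * N"
    using ex_take_cnt_eq[of "(i + n * j) * N" a u] count_a by auto
  define u1 r where "u1 = take s1 u" and "r = drop s1 u"
  have "m * (j * N) \<le> m * cnt b u1"
    using adm[rule_format, of s1] s1 by (simp add: admissible_def u1_def algebra_simps)
  then have jN: "j * N \<le> cnt b u1"
    using \<open>0 < m\<close> by simp
  have "cnt a (take s r) \<le> m * (cnt b u1 - j * N + cnt b (take s r))" for s
  proof -
    have "take (s1 + s) u = u1 @ take s r"
      by (simp add: u1_def r_def take_add)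
    then have "cnt a (take s r) + m * (j * N) \<le> m * (cnt b u1 + cnt b (take s r))"
      using adm[rule_format, of "s1 + s"] s1 by (simp add: admissible_def u1_def algebra_simps)
    moreover obtain e where "cnt b u1 = j * N + e"
      using jN le_Suc_ex by blast
    ultimately show ?thesis
      by (simp add: algebra_simps)
  qed
  moreover have "admissible i n j m N (cnt a (take s u1)) (cnt b (take s u1))" for s
    using adm by (simp add: u1_def)
  moreover have "u = u1 @ r" "cnt a r = m * t"
    using count_a s1 cnt_append[of a u1 r] by (simp_all add: u1_def r_def)
  ultimately show ?thesis
    using s1 jN unfolding u1_def[symmetric] by blast
qed

lemma real_excess_bound_iff:
  fixes A2 A4 B2 D N j m :: nat
  assumes "cnt a u1 = D * N" and "j * N \<le> cnt b u1" and "0 < D" and "0 < m"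
  shows "(real A2 + real A4) / real m - real B2
      \<le> real (length u1) - real (cnt a u1) * real (D + j) / real D
    \<longleftrightarrow> A2 + A4 \<le> m * (cnt b u1 - j * N + B2)"
proof -
  have "real (length u1) - real (cnt a u1) * real (D + j) / real D = real (cnt b u1 - j * N)"
    using assms(1-3) length_eq_cnt_a_plus_cnt_b[of u1] by (simp add: of_nat_diff field_simps)
  then have "(real A2 + real A4) / real m - real B2
      \<le> real (length u1) - real (cnt a u1) * real (D + j) / real D
    \<longleftrightarrow> (real A2 + real A4) / real m \<le> real (cnt b u1 - j * N) + real B2"
    by (simp add: diff_le_eq)
  also have "\<dots> \<longleftrightarrow> real A2 + real A4 \<le> (real (cnt b u1 - j * N) + real B2) * real m"
    using assms(4) by (simp add: pos_divide_le_eq)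
  also have "\<dots> \<longleftrightarrow> real (A2 + A4) \<le> real (m * (cnt b u1 - j * N + B2))"
    by (simp add: mult.commute)
  finally show ?thesis
    by (simp only: of_nat_le_iff)
qed

lemma L_eps_stairs_decompose:
  assumes "i \<le> n" and "1 \<le> j \<longrightarrow> m \<le> n" and "0 < m" and W: "stairs i n (Suc j) = Y @ [a, b]"
    and "u \<in> L_eps {Y @ [a, b], Y @ [a, b] @ replicate m a}"
  shows "\<exists>u1 u2 u3 u4. u = u1 @ u2 @ u3 @ u4
       \<and> u1 \<in> L_eps {Y @ [a, b], Y @ [a]}
       \<and> u2 \<in> L_eps {b # replicate m a, [a]}
       \<and> u3 \<in> L_eps {b # replicate m a, [b]}
       \<and> cnt a u4 < m
       \<and> cnt a (u2 @ u4) mod m = 0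
       \<and> cnt a u1 * Suc j = (i + n * j) * cnt b u
       \<and> (real (cnt a u2) + real (cnt a u4)) / real m - real (cnt b u2)
           \<le> real (length u1) - real (cnt a u1) * real (i + n * j + j) / real (i + n * j)"
proof -
  obtain N t where count_b: "cnt b u = Suc j * N" and count_a: "cnt a u = (i + n * j) * N + m * t"
    and adm: "\<forall>s. admissible i n j m N (cnt a (take s u)) (cnt b (take s u))"
    using assms(5) L_eps_stairs_iff[OF assms(1,2)] W by (metis append_assoc)
  obtain u1 r where u: "u = u1 @ r" and u1: "cnt a u1 = (i + n * j) * N" "j * N \<le> cnt b u1"
    "\<forall>s. admissible i n j m N (cnt a (take s u1)) (cnt b (take s u1))"
    and r: "\<forall>s. cnt a (take s r) \<le> m * (cnt b u1 - j * N + cnt b (take s r))" "cnt a r = m * t"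
    using admissible_head_split[OF adm count_a assms(3)] by blast
  obtain u2 u3 u4 where r_eq: "r = u2 @ u3 @ u4"
    and u2: "\<forall>s. m * cnt b (drop s u2) \<le> cnt a (drop s u2)"
    and u3: "m dvd cnt a u3" "\<forall>s. cnt a (take s u3) \<le> m * cnt b (take s u3)"
    and u4: "cnt a u4 < m" "cnt a (u2 @ u4) mod m = 0"
    and bound: "cnt a u2 + cnt a u4 \<le> m * (cnt b u1 - j * N + cnt b u2)"
    using tail_decomposition[OF assms(3) r(1)] r(2) by (metis dvd_triv_left)
  have "cnt b u1 \<le> Suc j * N"
    using count_b u by simp
  then have u1_mem: "u1 \<in> L_eps {Y @ [a, b], Y @ [a]}"
    using L_eps_stairs_butlast_iff[OF assms(1,2) W] u1 by blast
  have u2_mem: "u2 \<in> L_eps {b # replicate m a, [a]}" and u3_mem: "u3 \<in> L_eps {b # replicate m a, [b]}"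
    using u2 u3 by (simp_all add: L_eps_b_am_a_iff L_eps_b_am_b_iff)
  have counts: "cnt a u1 * Suc j = (i + n * j) * cnt b u"
    using u1(1) count_b by (simp add: algebra_simps)
  have D: "0 < i + n * j"
    using arg_cong[OF W, of "cnt a"] by simp
  have real_bound: "(real (cnt a u2) + real (cnt a u4)) / real m - real (cnt b u2)
      \<le> real (length u1) - real (cnt a u1) * real (i + n * j + j) / real (i + n * j)"
    using bound real_excess_bound_iff[OF u1(1,2) D assms(3)] by blast
  from u r_eq have u_eq: "u = u1 @ u2 @ u3 @ u4"
    by simp
  show ?thesis
    by (rule exI[of _ u1], rule exI[of _ u2], rule exI[of _ u3], rule exI[of _ u4])
      (intro conjI u_eq u1_mem u2_mem u3_mem u4 counts real_bound)
qed

lemma L_eps_stairs_compose: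
  assumes "i \<le> n" and "1 \<le> j \<longrightarrow> m \<le> n" and "0 < m" and W: "stairs i n (Suc j) = Y @ [a, b]"
    and u: "u = u1 @ u2 @ u3 @ u4" and "u1 \<in> L_eps {Y @ [a, b], Y @ [a]}"
    and "u2 \<in> L_eps {b # replicate m a, [a]}" and "u3 \<in> L_eps {b # replicate m a, [b]}"
    and "cnt a (u2 @ u4) mod m = 0"
    and counts: "cnt a u1 * Suc j = (i + n * j) * cnt b u"
    and real_bound: "(real (cnt a u2) + real (cnt a u4)) / real m - real (cnt b u2)
      \<le> real (length u1) - real (cnt a u1) * real (i + n * j + j) / real (i + n * j)"
  shows "u \<in> L_eps {Y @ [a, b], Y @ [a, b] @ replicate m a}"
proof -
  obtain N where count_a: "cnt a u1 = (i + n * j) * N" and jN: "j * N \<le> cnt b u1"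
    and adm1: "\<forall>s. admissible i n j m N (cnt a (take s u1)) (cnt b (take s u1))"
    using assms(6) L_eps_stairs_butlast_iff[OF assms(1,2) W] by blast
  have D: "0 < i + n * j"
    using arg_cong[OF W, of "cnt a"] by simp
  have "(i + n * j) * (Suc j * N) = (i + n * j) * cnt b u"
    using counts count_a by (metis mult.assoc mult.commute)
  with D have count_b: "cnt b u = Suc j * N"
    by (metis mult_left_cancel not_gr0)
  have bound: "cnt a u2 + cnt a u4 \<le> m * (cnt b u1 - j * N + cnt b u2)"
    using real_bound real_excess_bound_iff[OF count_a jN D assms(3)] by blast
  have u2: "\<forall>s. m * cnt b (drop s u2) \<le> cnt a (drop s u2)"
    and u3: "m dvd cnt a u3" "\<forall>s. cnt a (take s u3) \<le> m * cnt b (take s u3)"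
    using assms(7,8) by (simp_all add: L_eps_b_am_a_iff L_eps_b_am_b_iff)
  have "cnt b (u1 @ u2 @ u3 @ u4) \<le> Suc j * N"
    using count_b u by simp
  then have "\<forall>s. admissible i n j m N (cnt a (take s u)) (cnt b (take s u))"
    using admissible_take_append[OF adm1 count_a jN _ _ assms(1,2)]
      tail_bound[OF u2 u3(2) bound] unfolding u by blast
  moreover obtain k k' where "cnt a u3 = m * k" "cnt a u2 + cnt a u4 = m * k'"
    using u3(1) assms(9)[unfolded cnt_append, THEN mod_0_imp_dvd] by (elim dvdE)
  then have "cnt a u = (i + n * j) * N + m * (k + k')"
    using count_a by (simp add: u algebra_simps)
  ultimately have "u \<in> L_eps {stairs i n (Suc j), stairs i n (Suc j) @ replicate m a}"
    using L_eps_stairs_iff[OF assms(1,2)] count_b by blast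
  then show ?thesis
    by (simp add: W)
qed

lemma L_eps_stairs_decomposition_iff:
  assumes "i \<le> n" and "1 \<le> j \<longrightarrow> m \<le> n" and "0 < m" and "stairs i n (Suc j) = Y @ [a, b]"
  shows "u \<in> L_eps {Y @ [a, b], Y @ [a, b] @ replicate m a} \<longleftrightarrow>
    (\<exists>u1 u2 u3 u4. u = u1 @ u2 @ u3 @ u4
       \<and> u1 \<in> L_eps {Y @ [a, b], Y @ [a]}
       \<and> u2 \<in> L_eps {b # replicate m a, [a]}
       \<and> u3 \<in> L_eps {b # replicate m a, [b]}
       \<and> cnt a u4 < m
       \<and> cnt a (u2 @ u4) mod m = 0
       \<and> cnt a u1 * Suc j = (i + n * j) * cnt b u
       \<and> (real (cnt a u2) + real (cnt a u4)) / real m - real (cnt b u2)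
           \<le> real (length u1) - real (cnt a u1) * real (i + n * j + j) / real (i + n * j))"
  by (rule iffI, erule L_eps_stairs_decompose[OF assms], elim exE conjE,
      rule L_eps_stairs_compose[OF assms], assumption+)

lemma stairs_Suc_eq_concat:
  "stairs i n (Suc k) = replicate i a @ concat (replicate k (b # replicate n a)) @ [b]"
proof (induction k)
  case (Suc k)
  have "concat (replicate (Suc k) (b # replicate n a))
      = concat (replicate k (b # replicate n a)) @ b # replicate n a"
    by (simp flip: replicate_append_same)
  with Suc.IH show ?case
    by (simp add: stairs_Suc[of i n "Suc k"])
qed (simp add: stairs_Suc)

lemma good_imp_tail_le:
  assumes "good (w @ [b] @ pw a n @ [b] @ pw a m)" and "1 \<le> n"
  shows "m \<le> n"
proof (rule ccontr)
  assume "\<not> m \<le> n"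
  have "rev (w @ [b] @ pw a n @ [b] @ pw a m) = [] @ (pw a m @ [b] @ pw a n @ pw b 1) @ rev w"
    by simp
  then have "has_factor (pw a m @ [b] @ pw a n @ pw b 1) (rev (w @ [b] @ pw a n @ [b] @ pw a m))"
    unfolding has_factor_def by blast
  moreover have "n < m"
    using \<open>\<not> m \<le> n\<close> by simp
  ultimately have "has_bad_factor (rev (w @ [b] @ pw a n @ [b] @ pw a m))"
    unfolding has_bad_factor_def using assms(2) by blast
  with assms(1) show False
    unfolding good_def bad_def by blast
qed

lemma stairs_shape:
  assumes "1 \<le> n"
    and "w = [] \<or> (\<exists>i k. i \<le> n \<and> w = pw a i @ concat (replicate k (b # pw a n)) @ [b])"
    and "good (w @ pw a n @ [b] @ pw a m)"
  obtains i j where "w @ replicate n a @ [b] = stairs i n (Suc j)" and "i \<le> n" and "1 \<le> j \<longrightarrow> m \<le> n"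
  using assms(2)
proof
  assume "w = []"
  then show thesis
    using that[of n 0] by (simp add: stairs_Suc)
next
  assume "\<exists>i k. i \<le> n \<and> w = pw a i @ concat (replicate k (b # pw a n)) @ [b]"
  then obtain i k where "i \<le> n" and w: "w = stairs i n (Suc k)"
    by (auto simp: stairs_Suc_eq_concat)
  moreover have "m \<le> n"
    using good_imp_tail_le[of "replicate i a @ concat (replicate k (b # replicate n a))"] assms(1,3) w
    by (simp add: stairs_Suc_eq_concat)
  ultimately show thesis
    using that[of i "Suc k"] by (simp add: stairs_Suc[of i n "Suc k"])
qed

theorem proposition8:
  fixes n m :: nat and w u :: word
  assumes "n \<ge> 1" and "m \<ge> 1"
    and "w = [] \<or> (\<exists>i k. i \<le> n \<and> w = pw a i @ concat (replicate k (b # pw a n)) @ [b])"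
    and "good (w @ pw a n @ [b] @ pw a m)"
  shows "u \<in> L_eps {w @ pw a n @ [b], w @ pw a n @ [b] @ pw a m} \<longleftrightarrow>
    (\<exists>u1 u2 u3 u4. u = u1 @ u2 @ u3 @ u4
       \<and> u1 \<in> L_eps {w @ pw a n @ [b], w @ pw a n}
       \<and> u2 \<in> L_eps {b # pw a m, [a]}
       \<and> u3 \<in> L_eps {b # pw a m, [b]}
       \<and> cnt a u4 < m
       \<and> cnt a (u2 @ u4) mod m = 0
       \<and> cnt a u1 * (cnt b w + 1) = (cnt a w + n) * cnt b u
       \<and> (real (cnt a u2) + real (cnt a u4)) / real m - real (cnt b u2)
           \<le> real (length u1) - real (cnt a u1) * (real (length w) + real n) / (real (cnt a w) + real n))"
proof -
  obtain i j where W: "w @ replicate n a @ [b] = stairs i n (Suc j)" and "i \<le> n" "1 \<le> j \<longrightarrow> m \<le> n"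
    using stairs_shape[OF assms(1,3,4)] by blast
  obtain n' where n': "n = Suc n'"
    using assms(1) by (cases n) auto
  define Y where "Y = w @ replicate n' a"
  have Y: "w @ replicate n a @ xs = Y @ a # xs" for xs
    by (simp add: Y_def n' replicate_append_same)
  have counts: "cnt a w + n = i + n * j" "cnt b w + 1 = Suc j" "length w + n = i + n * j + j"
    using arg_cong[OF W, of "cnt a"] arg_cong[OF W, of "cnt b"] length_eq_cnt_a_plus_cnt_b[of w]
    by simp_all
  have "{w @ pw a n @ [b], w @ pw a n @ [b] @ pw a m} = {Y @ [a, b], Y @ [a, b] @ replicate m a}"
    "{w @ pw a n @ [b], w @ pw a n} = {Y @ [a, b], Y @ [a]}"
    "{b # pw a m, [a]} = {b # replicate m a, [a]}" "{b # pw a m, [b]} = {b # replicate m a, [b]}"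
    using Y[of "[]"] by (simp_all add: Y)
  moreover have "real (length w) + real n = real (i + n * j + j)"
    "real (cnt a w) + real n = real (i + n * j)"
    using counts by (simp_all flip: of_nat_add)
  moreover have "stairs i n (Suc j) = Y @ [a, b]"
    using W by (simp add: Y)
  ultimately show ?thesis
    unfolding counts(1,2)
    using L_eps_stairs_decomposition_iff[OF \<open>i \<le> n\<close> \<open>1 \<le> j \<longrightarrow> m \<le> n\<close>] assms(2) by simp
qed

end
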